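(* Let $G$, $A$, $H$, $\beta$, $G_\beta$, $(K,v)$, $\sigma$, $\delta$ be as in the context. Then the map $val:K(t^H,\beta)_\delta\to G_\beta\cup\{\infty\}$ given by $val\left(\sum_{h\in S}a_ht^h\right)=(v(a_{h_0}),h_0)$, where $h_0$ is the least element of the support $S$ (with $a_{h_0}\neq 0$), and $val(0)=\infty$ (a symbol greater than every element of $G_\beta$), is a valuation on the field $K(t^H,\beta)_\delta$.
   Context: $G$ is an ordered abelian group with smallest nonzero convex subgroup $A$, $H=G/A$ with the induced order, $\rho:G\to H$ the projection; $\alpha:H\to G$ is a transversal map ($\rho\alpha=\mathrm{id}_H$, $\alpha(0)=0$) and $\beta(h,h')=\alpha(h+h')-\alpha(h)-\alpha(h')\in A$. $G_\beta$ is $A\times H$ with $(z,h)+(z',h')=(z+z'-\beta(h,h'),h+h')$ and lexicographic order ($(z,h)\le(z',h')$ iff $h<h'$, or $h=h'$ and $z\le z'$); it is an ordered abelian group. $(K,v)$ is a valued field of characteristic $0$, residue characteristic $p$, value group $A$, with cross-section $\sigma:A\to K^\times$ (homomorphism, $v(\sigma(a))=a$). $\delta$ is an infinite cardinal and $K(t^H,\beta)_\delta$ is the field of formal sums $\sum_{h\in S}a_ht^h$, $S\subseteq H$ well ordered, $|S|\le\delta$, $a_h\in K$, with coefficientwise addition and multiplication $\left(\sum a_ht^h\right)\left(\sum b_ht^h\right)=\sum_l\left(\sum_{h+h'=l}a_hb_{h'}\sigma(-\beta(h,h'))\right)t^l$. *)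

theory Defs
  imports Main
begin

definition convex_subgroup :: "'g::linordered_ab_group_add set \<Rightarrow> bool" where
  "convex_subgroup B \<longleftrightarrow> 0 \<in> B \<and> (\<forall>x\<in>B. \<forall>y\<in>B. x + y \<in> B) \<and> (\<forall>x\<in>B. - x \<in> B)
     \<and> (\<forall>x y z. x \<in> B \<longrightarrow> z \<in> B \<longrightarrow> x \<le> y \<longrightarrow> y \<le> z \<longrightarrow> y \<in> B)"

definition smallest_nonzero_convex :: "'g::linordered_ab_group_add set \<Rightarrow> bool" where
  "smallest_nonzero_convex A \<longleftrightarrow> convex_subgroup A \<and> A \<noteq> {0}
     \<and> (\<forall>B. convex_subgroup B \<and> B \<noteq> {0} \<longrightarrow> A \<subseteq> B)"

text \<open>Cosets: the projection rho : G \<rightarrow> H = G/A; elements of H are the cosets x + A.\<close>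
definition rho :: "'g::linordered_ab_group_add set \<Rightarrow> 'g \<Rightarrow> 'g set" where
  "rho A x = (\<lambda>a. x + a) ` A"

definition Hq :: "'g::linordered_ab_group_add set \<Rightarrow> 'g set set" where
  "Hq A = range (rho A)"

definition hadd :: "'g::linordered_ab_group_add set \<Rightarrow> 'g set \<Rightarrow> 'g set" where
  "hadd h h' = {x + y | x y. x \<in> h \<and> y \<in> h'}"

definition hle :: "'g::linordered_ab_group_add set \<Rightarrow> 'g set \<Rightarrow> 'g set \<Rightarrow> bool" where
  "hle A h h' \<longleftrightarrow> (\<exists>x y. h = rho A x \<and> h' = rho A y \<and> x \<le> y)"

definition hless :: "'g::linordered_ab_group_add set \<Rightarrow> 'g set \<Rightarrow> 'g set \<Rightarrow> bool" where
  "hless A h h' \<longleftrightarrow> hle A h h' \<and> h \<noteq> h'"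

definition transversal :: "'g::linordered_ab_group_add set \<Rightarrow> ('g set \<Rightarrow> 'g) \<Rightarrow> bool" where
  "transversal A \<alpha> \<longleftrightarrow> (\<forall>h\<in>Hq A. rho A (\<alpha> h) = h) \<and> \<alpha> (rho A 0) = 0"

definition beta :: "('g::linordered_ab_group_add set \<Rightarrow> 'g) \<Rightarrow> 'g set \<Rightarrow> 'g set \<Rightarrow> 'g" where
  "beta \<alpha> h h' = \<alpha> (hadd h h') - \<alpha> h - \<alpha> h'"

definition gb_add :: "('g::linordered_ab_group_add set \<Rightarrow> 'g) \<Rightarrow> 'g \<times> 'g set \<Rightarrow> 'g \<times> 'g set \<Rightarrow> 'g \<times> 'g set" where
  "gb_add \<alpha> p q = (fst p + fst q - beta \<alpha> (snd p) (snd q), hadd (snd p) (snd q))"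

definition gb_le :: "'g::linordered_ab_group_add set \<Rightarrow> 'g \<times> 'g set \<Rightarrow> 'g \<times> 'g set \<Rightarrow> bool" where
  "gb_le A p q \<longleftrightarrow> hless A (snd p) (snd q) \<or> (snd p = snd q \<and> fst p \<le> fst q)"

text \<open>None plays the role of \<infinity>, which is greater than every element and absorbing for +.\<close>
definition gbi_add :: "('g::linordered_ab_group_add set \<Rightarrow> 'g) \<Rightarrow> ('g \<times> 'g set) option \<Rightarrow> ('g \<times> 'g set) option \<Rightarrow> ('g \<times> 'g set) option" where
  "gbi_add \<alpha> x y = (case x of None \<Rightarrow> None | Some p \<Rightarrow> (case y of None \<Rightarrow> None | Some q \<Rightarrow> Some (gb_add \<alpha> p q)))"

definition gbi_le :: "'g::linordered_ab_group_add set \<Rightarrow> ('g \<times> 'g set) option \<Rightarrow> ('g \<times> 'g set) option \<Rightarrow> bool" where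
  "gbi_le A x y = (case y of None \<Rightarrow> True | Some q \<Rightarrow> (case x of None \<Rightarrow> False | Some p \<Rightarrow> gb_le A p q))"

text \<open>v : K \<rightarrow> A \<union> {\<infinity>}, with None = \<infinity>.\<close>
definition oi_le :: "'g::linordered_ab_group_add option \<Rightarrow> 'g option \<Rightarrow> bool" where
  "oi_le x y = (case y of None \<Rightarrow> True | Some b \<Rightarrow> (case x of None \<Rightarrow> False | Some a \<Rightarrow> a \<le> b))"

definition oi_add :: "'g::linordered_ab_group_add option \<Rightarrow> 'g option \<Rightarrow> 'g option" where
  "oi_add x y = (case x of None \<Rightarrow> None | Some a \<Rightarrow> (case y of None \<Rightarrow> None | Some b \<Rightarrow> Some (a + b)))"

definition valued_field :: "'g::linordered_ab_group_add set \<Rightarrow> ('k::field \<Rightarrow> 'g option) \<Rightarrow> bool" where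
  "valued_field A v \<longleftrightarrow>
     (\<forall>x. v x = None \<longleftrightarrow> x = 0)
   \<and> (\<forall>x. x \<noteq> 0 \<longrightarrow> the (v x) \<in> A)
   \<and> (\<forall>a\<in>A. \<exists>x. v x = Some a)
   \<and> (\<forall>x y. v (x * y) = oi_add (v x) (v y))
   \<and> (\<forall>x y. oi_le (v x) (v (x + y)) \<or> oi_le (v y) (v (x + y)))"

text \<open>The residue field has characteristic p: n \<cdot> 1 lies in the maximal ideal iff p divides n.\<close>
definition residue_char :: "('k::field \<Rightarrow> 'g::linordered_ab_group_add option) \<Rightarrow> nat \<Rightarrow> bool" where
  "residue_char v p \<longleftrightarrow> (\<forall>n::nat. (\<not> oi_le (v (of_nat n)) (Some 0)) \<longleftrightarrow> p dvd n)"

definition cross_section :: "'g::linordered_ab_group_add set \<Rightarrow> ('k::field \<Rightarrow> 'g option) \<Rightarrow> ('g \<Rightarrow> 'k) \<Rightarrow> bool" where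
  "cross_section A v \<sigma> \<longleftrightarrow> (\<forall>a\<in>A. \<sigma> a \<noteq> 0 \<and> v (\<sigma> a) = Some a)
     \<and> (\<forall>a\<in>A. \<forall>b\<in>A. \<sigma> (a + b) = \<sigma> a * \<sigma> b)"

text \<open>A formal sum \<Sum>_{h\<in>S} a_h t^h is represented by its coefficient function H \<rightarrow> K.
  The infinite cardinal delta is represented by an infinite set D of cardinality delta.\<close>

definition supp :: "('h \<Rightarrow> 'k::zero) \<Rightarrow> 'h set" where
  "supp f = {h. f h \<noteq> 0}"

definition well_ordered_H :: "'g::linordered_ab_group_add set \<Rightarrow> 'g set set \<Rightarrow> bool" where
  "well_ordered_H A S \<longleftrightarrow> (\<forall>T. T \<subseteq> S \<and> T \<noteq> {} \<longrightarrow> (\<exists>m\<in>T. \<forall>t\<in>T. hle A m t))"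

definition card_le :: "'a set \<Rightarrow> 'd set \<Rightarrow> bool" where
  "card_le S D \<longleftrightarrow> (\<exists>g. inj_on g S \<and> g ` S \<subseteq> D)"

definition FS :: "'g::linordered_ab_group_add set \<Rightarrow> 'd set \<Rightarrow> ('g set \<Rightarrow> 'k::field) set" where
  "FS A D = {f. supp f \<subseteq> Hq A \<and> well_ordered_H A (supp f) \<and> card_le (supp f) D}"

definition fs_zero :: "'g set \<Rightarrow> 'k::field" where
  "fs_zero = (\<lambda>_. 0)"

definition fs_add :: "('g set \<Rightarrow> 'k::field) \<Rightarrow> ('g set \<Rightarrow> 'k) \<Rightarrow> 'g set \<Rightarrow> 'k" where
  "fs_add f g = (\<lambda>h. f h + g h)"

definition fs_mul :: "('g::linordered_ab_group_add set \<Rightarrow> 'g) \<Rightarrow> ('g \<Rightarrow> 'k::field)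
    \<Rightarrow> ('g set \<Rightarrow> 'k) \<Rightarrow> ('g set \<Rightarrow> 'k) \<Rightarrow> 'g set \<Rightarrow> 'k" where
  "fs_mul \<alpha> \<sigma> f g = (\<lambda>l. \<Sum>(h, h') \<in> {(h, h'). h \<in> supp f \<and> h' \<in> supp g \<and> hadd h h' = l}.
        f h * g h' * \<sigma> (- beta \<alpha> h h'))"

definition fs_val :: "'g::linordered_ab_group_add set \<Rightarrow> ('k::field \<Rightarrow> 'g option)
    \<Rightarrow> ('g set \<Rightarrow> 'k) \<Rightarrow> ('g \<times> 'g set) option" where
  "fs_val A v f = (if f = fs_zero then None else
     (let h0 = (THE h. h \<in> supp f \<and> (\<forall>h'\<in>supp f. hle A h h')) in Some (the (v (f h0)), h0)))"

definition is_valuation_Gbeta :: "'g::linordered_ab_group_add set \<Rightarrow> ('g set \<Rightarrow> 'g)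
    \<Rightarrow> 'f set \<Rightarrow> 'f \<Rightarrow> ('f \<Rightarrow> 'f \<Rightarrow> 'f) \<Rightarrow> ('f \<Rightarrow> 'f \<Rightarrow> 'f) \<Rightarrow> ('f \<Rightarrow> ('g \<times> 'g set) option) \<Rightarrow> bool" where
  "is_valuation_Gbeta A \<alpha> F z ad mu w \<longleftrightarrow>
     (\<forall>x\<in>F. w x = None \<or> (\<exists>p. w x = Some p \<and> fst p \<in> A \<and> snd p \<in> Hq A))
   \<and> (\<forall>x\<in>F. w x = None \<longleftrightarrow> x = z)
   \<and> (\<forall>x\<in>F. \<forall>y\<in>F. w (mu x y) = gbi_add \<alpha> (w x) (w y))
   \<and> (\<forall>x\<in>F. \<forall>y\<in>F. gbi_le A (w x) (w (ad x y)) \<or> gbi_le A (w y) (w (ad x y)))"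

end

theory Submission
  imports Defs
begin

(* If h + h' = a + b in H with a <= h and b <= h', then h = a and h' = b, because A is convex.
   Hence the leading exponent of a product of series with leading exponents a and b is a + b,
   with coefficient f a * g b * sigma (- beta a b); its value v (f a) + v (g b) - beta a b is
   the first component of (v (f a), a) + (v (g b), b) in G_beta.  The leading exponent of f + g
   is at least the smaller of a and b, and when it equals both, the ultrametric inequality is
   that of v. *)

definition least_in :: "'g::linordered_ab_group_add set \<Rightarrow> 'g set set \<Rightarrow> 'g set \<Rightarrow> bool" where
  "least_in A S m \<longleftrightarrow> m \<in> S \<and> (\<forall>t\<in>S. hle A m t)"

definition well_supported :: "'g::linordered_ab_group_add set \<Rightarrow> ('g set \<Rightarrow> 'k::zero) \<Rightarrow> bool" where
  "well_supported A f \<longleftrightarrow> supp f \<subseteq> Hq A \<and> well_ordered_H A (supp f)"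

lemma FS_well_supported: "f \<in> FS A D \<Longrightarrow> well_supported A f"
  unfolding FS_def well_supported_def by blast

lemma fs_zero_iff_supp_empty: "f = fs_zero \<longleftrightarrow> supp f = {}"
  unfolding fs_zero_def supp_def by auto

lemma supp_fs_add: "supp (fs_add f g) \<subseteq> supp f \<union> supp g"
  unfolding supp_def fs_add_def by auto

lemma fs_add_commute: "fs_add f g = fs_add g f"
  unfolding fs_add_def by (simp add: add.commute)

lemma fs_add_zero_left: "fs_add fs_zero g = g" and fs_add_zero_right: "fs_add f fs_zero = f"
  unfolding fs_add_def fs_zero_def by simp_all

lemma fs_mul_zero_left: "fs_mul \<alpha> \<sigma> fs_zero g = fs_zero"
  and fs_mul_zero_right: "fs_mul \<alpha> \<sigma> f fs_zero = fs_zero"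
  unfolding fs_mul_def fs_zero_def supp_def by simp_all

(* The index set of the sum defining fs_mul need not be finite; an infinite sum is 0, so only
   nonemptiness can be inferred. *)
lemma supp_fs_mul:
  assumes "l \<in> supp (fs_mul \<alpha> \<sigma> f g)"
  obtains h h' where "h \<in> supp f" "h' \<in> supp g" "l = hadd h h'"
proof -
  let ?P = "{(h, h'). h \<in> supp f \<and> h' \<in> supp g \<and> hadd h h' = l}"
  have "(\<Sum>(h, h') \<in> ?P. f h * g h' * \<sigma> (- beta \<alpha> h h')) \<noteq> 0"
    using assms unfolding supp_def fs_mul_def by simp
  then have "?P \<noteq> {}" by (rule contrapos_nn) (simp only: sum.empty)
  then show thesis using that by blast
qed

lemma well_ordered_H_least: "well_ordered_H A S \<Longrightarrow> S \<noteq> {} \<Longrightarrow> \<exists>m. least_in A S m"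
  unfolding well_ordered_H_def least_in_def by blast

lemma well_ordered_H_subset: "well_ordered_H A S \<Longrightarrow> T \<subseteq> S \<Longrightarrow> well_ordered_H A T"
  unfolding well_ordered_H_def by blast

lemma fs_val_zero: "fs_val A v fs_zero = None"
  unfolding fs_val_def by simp

lemma fs_val_eq_None_iff: "fs_val A v f = None \<longleftrightarrow> f = fs_zero"
  unfolding fs_val_def Let_def by simp

lemma gbi_le_refl: "gbi_le A z z"
  unfolding gbi_le_def gb_le_def by (cases z) auto

locale convex_quotient =
  fixes A :: "'g::linordered_ab_group_add set"
  assumes convex: "convex_subgroup A"
begin

lemma zero_in: "0 \<in> A"
  and add_in: "x \<in> A \<Longrightarrow> y \<in> A \<Longrightarrow> x + y \<in> A"
  and uminus_in: "x \<in> A \<Longrightarrow> - x \<in> A"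
  and between_in: "a \<in> A \<Longrightarrow> b \<in> A \<Longrightarrow> a \<le> x \<Longrightarrow> x \<le> b \<Longrightarrow> x \<in> A"
  using convex unfolding convex_subgroup_def by blast+

lemma rho_eq_iff: "rho A x = rho A y \<longleftrightarrow> x - y \<in> A"
proof
  assume "rho A x = rho A y"
  moreover have "x \<in> rho A x" using zero_in unfolding rho_def by force
  ultimately obtain a where "a \<in> A" "x = y + a" unfolding rho_def by auto
  then show "x - y \<in> A" by simp
next
  have sub: "rho A x \<subseteq> rho A y" if "x - y \<in> A" for x y
  proof
    fix z assume "z \<in> rho A x"
    then obtain a where "a \<in> A" "z = y + ((x - y) + a)" unfolding rho_def by auto
    then show "z \<in> rho A y" using that add_in unfolding rho_def by blast
  qed
  assume "x - y \<in> A"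
  moreover from this have "y - x \<in> A" using uminus_in by force
  ultimately show "rho A x = rho A y" using sub by blast
qed

lemma hadd_rho: "hadd (rho A x) (rho A y) = rho A (x + y)"
  unfolding hadd_def rho_def
proof (intro equalityI subsetI)
  fix z assume "z \<in> {u + w |u w. u \<in> (+) x ` A \<and> w \<in> (+) y ` A}"
  then obtain a b where "a \<in> A" "b \<in> A" "z = (x + y) + (a + b)" by (auto simp: algebra_simps)
  then show "z \<in> (+) (x + y) ` A" using add_in by blast
next
  fix z assume "z \<in> (+) (x + y) ` A"
  then obtain a where "a \<in> A" "z = (x + a) + (y + 0)" by (auto simp: algebra_simps)
  then show "z \<in> {u + w |u w. u \<in> (+) x ` A \<and> w \<in> (+) y ` A}" using zero_in by blast
qed

lemma hle_rho_iff: "hle A (rho A x) (rho A y) \<longleftrightarrow> (\<exists>a\<in>A. x \<le> y + a)"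
proof
  assume "hle A (rho A x) (rho A y)"
  then obtain x' y' where "x - x' \<in> A" "y - y' \<in> A" "x' \<le> y'"
    unfolding hle_def rho_eq_iff by blast
  moreover have "x \<le> y + ((x - x') - (y - y'))" using \<open>x' \<le> y'\<close> by simp
  ultimately show "\<exists>a\<in>A. x \<le> y + a" using add_in uminus_in by force
next
  assume "\<exists>a\<in>A. x \<le> y + a"
  then obtain a where "a \<in> A" "x \<le> y + a" by blast
  moreover from this have "rho A y = rho A (y + a)" using uminus_in by (simp add: rho_eq_iff)
  ultimately show "hle A (rho A x) (rho A y)" unfolding hle_def by blast
qed

lemma HqE:
  assumes "h \<in> Hq A"
  obtains x where "h = rho A x"
  using assms unfolding Hq_def by blast

lemma rho_in_Hq: "rho A x \<in> Hq A"
  unfolding Hq_def by simp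

lemma hadd_in_Hq: "h \<in> Hq A \<Longrightarrow> h' \<in> Hq A \<Longrightarrow> hadd h h' \<in> Hq A"
  by (metis HqE hadd_rho rho_in_Hq)

lemma hle_total: "h \<in> Hq A \<Longrightarrow> h' \<in> Hq A \<Longrightarrow> hle A h h' \<or> hle A h' h"
  using zero_in by (metis HqE add_0_right hle_rho_iff linear)

lemma hle_trans:
  assumes "h1 \<in> Hq A" "h2 \<in> Hq A" "h3 \<in> Hq A" "hle A h1 h2" "hle A h2 h3"
  shows "hle A h1 h3"
proof -
  obtain x y z where reps: "h1 = rho A x" "h2 = rho A y" "h3 = rho A z"
    using assms(1-3) HqE by metis
  then obtain a b where "a \<in> A" "b \<in> A" "x \<le> y + a" "y \<le> z + b"
    using assms(4,5) hle_rho_iff by metis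
  moreover have "y + a \<le> z + (b + a)"
    using add_right_mono[OF \<open>y \<le> z + b\<close>, of a] by (simp add: add.assoc)
  ultimately have "x \<le> z + (b + a)" "b + a \<in> A" using add_in order_trans by blast+
  then show ?thesis using reps hle_rho_iff by blast
qed

lemma hle_antisym:
  assumes "h \<in> Hq A" "h' \<in> Hq A" "hle A h h'" "hle A h' h"
  shows "h = h'"
proof -
  obtain x y where reps: "h = rho A x" "h' = rho A y"
    using assms(1,2) HqE by metis
  then obtain a b where "a \<in> A" "b \<in> A" "x \<le> y + a" "y \<le> x + b"
    using assms(3,4) hle_rho_iff by metis
  moreover from this have "- b \<le> x - y" "x - y \<le> a" by (simp_all add: algebra_simps)
  ultimately have "x - y \<in> A" using between_in uminus_in by blast
  then show ?thesis using reps rho_eq_iff by blast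
qed

lemma hadd_mono:
  assumes "a \<in> Hq A" "b \<in> Hq A" "h \<in> Hq A" "h' \<in> Hq A" "hle A a h" "hle A b h'"
  shows "hle A (hadd a b) (hadd h h')"
proof -
  obtain x y u w where reps: "a = rho A x" "b = rho A y" "h = rho A u" "h' = rho A w"
    using assms(1-4) HqE by metis
  then obtain c d where "c \<in> A" "d \<in> A" "x \<le> u + c" "y \<le> w + d"
    using assms(5,6) hle_rho_iff by metis
  then have "x + y \<le> (u + w) + (c + d)" "c + d \<in> A"
    using add_mono[of x "u + c" y "w + d"] add_in by (simp_all add: algebra_simps)
  then show ?thesis using reps hadd_rho hle_rho_iff by metis
qed

lemma hadd_le_eq_imp_eq:
  assumes "a \<in> Hq A" "b \<in> Hq A" "h \<in> Hq A" "h' \<in> Hq A" "hle A a h" "hle A b h'"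
    and "hadd h h' = hadd a b"
  shows "h = a \<and> h' = b"
proof -
  obtain x y u w where reps: "a = rho A x" "b = rho A y" "h = rho A u" "h' = rho A w"
    using assms(1-4) HqE by metis
  then obtain c d where "c \<in> A" "d \<in> A" "x \<le> u + c" "y \<le> w + d"
    using assms(5,6) hle_rho_iff by metis
  define e where "e = (u + w) - (x + y)"
  have "e \<in> A" using reps assms(7) hadd_rho rho_eq_iff unfolding e_def by metis
  have "- c \<le> u - x" "u - x \<le> e + d" "- d \<le> w - y" "w - y \<le> e + c"
    using \<open>x \<le> u + c\<close> \<open>y \<le> w + d\<close> unfolding e_def by (simp_all add: algebra_simps)
  then have "u - x \<in> A" "w - y \<in> A"
    using \<open>c \<in> A\<close> \<open>d \<in> A\<close> \<open>e \<in> A\<close> between_in uminus_in add_in by meson+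
  then show ?thesis using reps rho_eq_iff by blast
qed

lemma least_in_unique:
  assumes "S \<subseteq> Hq A" "least_in A S m" "least_in A S m'"
  shows "m = m'"
  using assms hle_antisym[of m m'] unfolding least_in_def by blast

lemma least_in_Un_if_le:
  assumes "S1 \<union> S2 \<subseteq> Hq A" "least_in A S1 m1" "least_in A S2 m2" "hle A m1 m2"
  shows "least_in A (S1 \<union> S2) m1"
  unfolding least_in_def
proof (intro conjI ballI)
  show "m1 \<in> S1 \<union> S2" using assms(2) unfolding least_in_def by blast
  fix t assume "t \<in> S1 \<union> S2"
  then show "hle A m1 t"
  proof
    assume "t \<in> S1"
    then show ?thesis using assms(2) unfolding least_in_def by blast
  next
    assume "t \<in> S2"
    then have "hle A m2 t" "m1 \<in> Hq A" "m2 \<in> Hq A" "t \<in> Hq A"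
      using assms(1-3) unfolding least_in_def by blast+
    then show ?thesis using hle_trans assms(4) by blast
  qed
qed

lemma least_in_Un:
  assumes "S1 \<union> S2 \<subseteq> Hq A" "least_in A S1 m1" "least_in A S2 m2"
  shows "\<exists>m. least_in A (S1 \<union> S2) m"
proof -
  have "m1 \<in> Hq A" "m2 \<in> Hq A" using assms unfolding least_in_def by blast+
  then consider "hle A m1 m2" | "hle A m2 m1" using hle_total by blast
  then show ?thesis
  proof cases
    case 1
    then show ?thesis using least_in_Un_if_le[OF assms] by blast
  next
    case 2
    moreover have "S2 \<union> S1 \<subseteq> Hq A" using assms(1) by blast
    ultimately have "least_in A (S2 \<union> S1) m2" using least_in_Un_if_le assms(2,3) by blast
    then show ?thesis by (auto simp: Un_commute)
  qed
qed

lemma well_ordered_H_Un: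
  assumes "S1 \<subseteq> Hq A" "S2 \<subseteq> Hq A" "well_ordered_H A S1" "well_ordered_H A S2"
  shows "well_ordered_H A (S1 \<union> S2)"
  unfolding well_ordered_H_def
proof (intro allI impI)
  fix T assume T: "T \<subseteq> S1 \<union> S2 \<and> T \<noteq> {}"
  show "\<exists>m\<in>T. \<forall>t\<in>T. hle A m t"
  proof (cases "T \<subseteq> S1 \<or> T \<subseteq> S2")
    case True
    then show ?thesis using T assms(3,4) unfolding well_ordered_H_def by blast
  next
    case False
    then have "T \<inter> S1 \<noteq> {}" "T \<inter> S2 \<noteq> {}" using T by blast+
    moreover have "well_ordered_H A (T \<inter> S1)" "well_ordered_H A (T \<inter> S2)"
      using well_ordered_H_subset[OF assms(3) Int_lower2] well_ordered_H_subset[OF assms(4) Int_lower2] .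
    ultimately obtain m1 m2 where m: "least_in A (T \<inter> S1) m1" "least_in A (T \<inter> S2) m2"
      using well_ordered_H_least by blast
    have "(T \<inter> S1) \<union> (T \<inter> S2) \<subseteq> Hq A" using assms(1,2) by blast
    then have "\<exists>m. least_in A ((T \<inter> S1) \<union> (T \<inter> S2)) m" using m by (rule least_in_Un)
    moreover have "(T \<inter> S1) \<union> (T \<inter> S2) = T" using T by blast
    ultimately show ?thesis unfolding least_in_def by auto
  qed
qed

lemma well_supported_least:
  "well_supported A f \<Longrightarrow> f \<noteq> fs_zero \<Longrightarrow> \<exists>m. least_in A (supp f) m"
  unfolding well_supported_def by (simp add: fs_zero_iff_supp_empty well_ordered_H_least)

lemma well_supported_fs_add:
  assumes "well_supported A f" "well_supported A g"
  shows "well_supported A (fs_add f g)"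
proof -
  have "well_ordered_H A (supp f \<union> supp g)"
    using assms well_ordered_H_Un unfolding well_supported_def by blast
  then show ?thesis
    using assms supp_fs_add[of f g] well_ordered_H_subset unfolding well_supported_def by blast
qed

lemma fs_val_least:
  assumes "supp f \<subseteq> Hq A" "least_in A (supp f) m"
  shows "fs_val A v f = Some (the (v (f m)), m)"
proof -
  have "(THE h. least_in A (supp f) h) = m"
  proof (rule the_equality)
    show "h = m" if "least_in A (supp f) h" for h
      using least_in_unique[OF assms(1) that assms(2)] .
  qed (fact assms(2))
  moreover have "f \<noteq> fs_zero"
    using assms(2) unfolding least_in_def by (auto simp: fs_zero_iff_supp_empty)
  ultimately show ?thesis unfolding fs_val_def least_in_def Let_def by simp
qed

lemma supp_fs_mul_subset_Hq:
  assumes "well_supported A f" "well_supported A g"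
  shows "supp (fs_mul \<alpha> \<sigma> f g) \<subseteq> Hq A"
proof
  fix l assume "l \<in> supp (fs_mul \<alpha> \<sigma> f g)"
  then obtain h h' where "h \<in> supp f" "h' \<in> supp g" "l = hadd h h'" by (rule supp_fs_mul)
  then show "l \<in> Hq A" using assms hadd_in_Hq unfolding well_supported_def by blast
qed

lemma fs_mul_at_hadd_least:
  assumes f: "well_supported A f" and g: "well_supported A g"
    and a: "least_in A (supp f) a" and b: "least_in A (supp g) b"
  shows "fs_mul \<alpha> \<sigma> f g (hadd a b) = f a * g b * \<sigma> (- beta \<alpha> a b)"
proof -
  have "{(h, h'). h \<in> supp f \<and> h' \<in> supp g \<and> hadd h h' = hadd a b} = {(a, b)}"
  proof (intro equalityI subsetI)
    fix q assume "q \<in> {(h, h'). h \<in> supp f \<and> h' \<in> supp g \<and> hadd h h' = hadd a b}"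
    then obtain h h' where "q = (h, h')" "h \<in> supp f" "h' \<in> supp g" "hadd h h' = hadd a b"
      by blast
    moreover from this have "h = a \<and> h' = b"
      using f g a b unfolding well_supported_def least_in_def by (intro hadd_le_eq_imp_eq) blast+
    ultimately show "q \<in> {(a, b)}" by simp
  qed (use a b in \<open>auto simp: least_in_def\<close>)
  then show ?thesis unfolding fs_mul_def by simp
qed

end

locale valued_coefficients = convex_quotient A
  for A :: "'g::linordered_ab_group_add set" +
  fixes v :: "'k::field \<Rightarrow> 'g option"
  assumes valued: "valued_field A v"
begin

lemma v_eq_None_iff: "v x = None \<longleftrightarrow> x = 0"
  and v_in_A: "x \<noteq> 0 \<Longrightarrow> the (v x) \<in> A"
  and v_mult: "v (x * y) = oi_add (v x) (v y)"
  and v_ultrametric: "oi_le (v x) (v (x + y)) \<or> oi_le (v y) (v (x + y))"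
  using valued unfolding valued_field_def by simp_all

lemma v_nonzero: "x \<noteq> 0 \<Longrightarrow> v x = Some (the (v x))"
  using v_eq_None_iff by auto

lemma fs_val_range:
  assumes "well_supported A f"
  shows "fs_val A v f = None \<or> (\<exists>p. fs_val A v f = Some p \<and> fst p \<in> A \<and> snd p \<in> Hq A)"
proof (cases "f = fs_zero")
  case False
  then obtain m where m: "least_in A (supp f) m" using assms well_supported_least by blast
  moreover have "supp f \<subseteq> Hq A" using assms unfolding well_supported_def by blast
  ultimately have "fs_val A v f = Some (the (v (f m)), m)" "m \<in> Hq A" "f m \<noteq> 0"
    using fs_val_least unfolding least_in_def supp_def by blast+
  then show ?thesis using v_in_A by simp
qed (simp add: fs_val_eq_None_iff)

lemma gb_le_leading_terms_fs_add:
  assumes f: "well_supported A f" and g: "well_supported A g"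
    and a: "least_in A (supp f) a" and b: "least_in A (supp g) b" and "hle A a b"
    and m: "least_in A (supp (fs_add f g)) m"
  shows "gb_le A (the (v (f a)), a) (the (v (fs_add f g m)), m)
       \<or> gb_le A (the (v (g b)), b) (the (v (fs_add f g m)), m)"
proof -
  have H: "a \<in> Hq A" "b \<in> Hq A" "m \<in> Hq A"
    using f g a b m supp_fs_add unfolding well_supported_def least_in_def by blast+
  have "hle A a m"
    using m supp_fs_add[of f g] a b hle_trans[OF H \<open>hle A a b\<close>] unfolding least_in_def by blast
  show ?thesis
  proof (cases "m = a")
    case False
    with \<open>hle A a m\<close> show ?thesis unfolding gb_le_def hless_def by simp
  next
    case True
    show ?thesis
    proof (cases "g a = 0")
      case True
      with \<open>m = a\<close> show ?thesis unfolding gb_le_def fs_add_def by simp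
    next
      case False
      then have "hle A b a" using b unfolding least_in_def supp_def by blast
      then have "a = b" using hle_antisym[OF H(1,2) \<open>hle A a b\<close>] by blast
      have "f a \<noteq> 0" "f a + g a \<noteq> 0"
        using a m \<open>m = a\<close> unfolding least_in_def supp_def fs_add_def by simp_all
      with \<open>g a \<noteq> 0\<close> obtain x y z where "v (f a) = Some x" "v (g a) = Some y" "v (f a + g a) = Some z"
        using v_nonzero by blast
      then have "the (v (f a)) \<le> the (v (f a + g a)) \<or> the (v (g a)) \<le> the (v (f a + g a))"
        using v_ultrametric[of "f a" "g a"] unfolding oi_le_def by simp
      then show ?thesis using \<open>m = a\<close> \<open>a = b\<close> unfolding gb_le_def fs_add_def by auto
    qed
  qed
qed

lemma fs_val_add:
  assumes f: "well_supported A f" and g: "well_supported A g"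
  shows "gbi_le A (fs_val A v f) (fs_val A v (fs_add f g))
       \<or> gbi_le A (fs_val A v g) (fs_val A v (fs_add f g))"
proof (cases "fs_add f g = fs_zero")
  case True
  then show ?thesis by (simp add: fs_val_zero gbi_le_def)
next
  case sum_nonzero: False
  show ?thesis
  proof (cases "f = fs_zero \<or> g = fs_zero")
    case True
    then have "fs_add f g = f \<or> fs_add f g = g" by (auto simp: fs_add_zero_left fs_add_zero_right)
    then show ?thesis using gbi_le_refl by metis
  next
    case False
    with sum_nonzero obtain a b m where a: "least_in A (supp f) a" and b: "least_in A (supp g) b"
      and m: "least_in A (supp (fs_add f g)) m"
      using f g well_supported_fs_add well_supported_least by meson
    have sH: "supp (fs_add f g) \<subseteq> Hq A" "supp (fs_add g f) \<subseteq> Hq A"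
      using f g well_supported_fs_add unfolding well_supported_def by blast+
    note vals = fs_val_least[OF _ a] fs_val_least[OF _ b] fs_val_least[OF sH(1) m]
    have "a \<in> Hq A" "b \<in> Hq A" using f g a b unfolding well_supported_def least_in_def by blast+
    then consider "hle A a b" | "hle A b a" using hle_total by blast
    then show ?thesis
    proof cases
      case 1
      then show ?thesis
        using gb_le_leading_terms_fs_add[OF f g a b 1 m] vals f g unfolding gbi_le_def well_supported_def by simp
    next
      case 2
      then show ?thesis
        using gb_le_leading_terms_fs_add[OF g f b a 2] m vals f g fs_add_commute[of f g]
        unfolding gbi_le_def well_supported_def by auto
    qed
  qed
qed

end

locale twisted_series = valued_coefficients A v
  for A :: "'g::linordered_ab_group_add set" and v :: "'k::field \<Rightarrow> 'g option" +
  fixes \<alpha> :: "'g set \<Rightarrow> 'g" and \<sigma> :: "'g \<Rightarrow> 'k"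
  assumes transversal: "transversal A \<alpha>" and cross_section: "cross_section A v \<sigma>"
begin

lemma sigma_nonzero: "a \<in> A \<Longrightarrow> \<sigma> a \<noteq> 0"
  and v_sigma: "a \<in> A \<Longrightarrow> v (\<sigma> a) = Some a"
  using cross_section unfolding cross_section_def by blast+

lemma beta_in: 
  assumes "h \<in> Hq A" "h' \<in> Hq A"
  shows "beta \<alpha> h h' \<in> A"
proof -
  have "rho A (\<alpha> h'') = h''" if "h'' \<in> Hq A" for h''
    using transversal that unfolding transversal_def by blast
  then have "rho A (\<alpha> (hadd h h')) = rho A (\<alpha> h + \<alpha> h')"
    using assms hadd_in_Hq hadd_rho by metis
  then show ?thesis unfolding beta_def rho_eq_iff by (simp add: diff_diff_eq)
qed

lemma fs_mul_least:
  assumes f: "well_supported A f" and g: "well_supported A g"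
    and a: "least_in A (supp f) a" and b: "least_in A (supp g) b"
  shows "least_in A (supp (fs_mul \<alpha> \<sigma> f g)) (hadd a b)"
proof -
  have H: "supp f \<subseteq> Hq A" "supp g \<subseteq> Hq A" using f g unfolding well_supported_def by blast+
  have "a \<in> Hq A" "b \<in> Hq A" "f a \<noteq> 0" "g b \<noteq> 0"
    using a b H unfolding least_in_def supp_def by auto
  then have "f a * g b * \<sigma> (- beta \<alpha> a b) \<noteq> 0"
    using beta_in uminus_in sigma_nonzero by simp
  then have "hadd a b \<in> supp (fs_mul \<alpha> \<sigma> f g)"
    using fs_mul_at_hadd_least[OF assms] unfolding supp_def by simp
  moreover have "hle A (hadd a b) l" if l: "l \<in> supp (fs_mul \<alpha> \<sigma> f g)" for l
  proof -
    obtain h h' where "h \<in> supp f" "h' \<in> supp g" "l = hadd h h'"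
      using l by (rule supp_fs_mul)
    then show ?thesis
      using a b H unfolding least_in_def by (auto intro: hadd_mono)
  qed
  ultimately show ?thesis unfolding least_in_def by blast
qed

lemma fs_val_mul:
  assumes f: "well_supported A f" and g: "well_supported A g"
  shows "fs_val A v (fs_mul \<alpha> \<sigma> f g) = gbi_add \<alpha> (fs_val A v f) (fs_val A v g)"
proof (cases "f = fs_zero \<or> g = fs_zero")
  case True
  then show ?thesis
    by (auto simp: fs_mul_zero_left fs_mul_zero_right fs_val_zero gbi_add_def
        split: option.split)
next
  case False
  then obtain a b where a: "least_in A (supp f) a" and b: "least_in A (supp g) b"
    using f g well_supported_least by meson
  have "a \<in> Hq A" "b \<in> Hq A" "f a \<noteq> 0" "g b \<noteq> 0"
    using a b f g unfolding least_in_def supp_def well_supported_def by auto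
  moreover from this have "- beta \<alpha> a b \<in> A" using beta_in uminus_in by blast
  moreover obtain x y where "v (f a) = Some x" "v (g b) = Some y"
    using \<open>f a \<noteq> 0\<close> \<open>g b \<noteq> 0\<close> v_nonzero by blast
  ultimately have "v (f a * g b * \<sigma> (- beta \<alpha> a b)) = Some (the (v (f a)) + the (v (g b)) - beta \<alpha> a b)"
    by (simp add: v_mult v_sigma oi_add_def)
  then show ?thesis
    using fs_val_least[OF supp_fs_mul_subset_Hq[OF f g] fs_mul_least[OF f g a b]]
      fs_mul_at_hadd_least[OF f g a b] fs_val_least[OF _ a] fs_val_least[OF _ b] f g
    unfolding gbi_add_def gb_add_def well_supported_def by simp
qed

end

theorem proposition2p2:
  fixes A :: "'g::linordered_ab_group_add set"
    and \<alpha> :: "'g set \<Rightarrow> 'g"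
    and v :: "'k::field_char_0 \<Rightarrow> 'g option"
    and \<sigma> :: "'g \<Rightarrow> 'k"
    and p :: nat
    and D :: "'d set"
  assumes "smallest_nonzero_convex A"
    and "transversal A \<alpha>"
    and "valued_field A v"
    and "residue_char v p"
    and "cross_section A v \<sigma>"
    and "infinite D"
  shows "is_valuation_Gbeta A \<alpha> (FS A D) fs_zero fs_add (fs_mul \<alpha> \<sigma>) (fs_val A v)"
proof -
  interpret twisted_series A v \<alpha> \<sigma>
    using assms unfolding smallest_nonzero_convex_def by unfold_locales auto
  have ws: "well_supported A f" if "f \<in> FS A D" for f
    using that by (rule FS_well_supported)
  show ?thesis
    unfolding is_valuation_Gbeta_def
    using fs_val_range[OF ws] fs_val_mul[OF ws ws] fs_val_add[OF ws ws]
    by (simp add: fs_val_eq_None_iff)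
qed

end
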